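(* Let $G$ be a connected labeled bipartite graph with an odd number of edges whose vertex set is partitioned into two independent sets $A$ and $B$ with $|A|\neq|B|$. Then $X(G;\mathbf{x},q)$ is not palindromic; in particular it is not symmetric.
   Context: A labeled graph is a finite simple graph with vertex set $[n]$. A proper coloring is $c\colon[n]\to\{1,2,\dots\}$ with adjacent vertices colored differently; $\operatorname{asc}(c)=\#\{ij\in E: i<j,\ c(i)<c(j)\}$. The CQF is $X(G;\mathbf{x},q)=\sum_{c \text{ proper}} x_{c(1)}\cdots x_{c(n)}q^{\operatorname{asc}(c)}$. It is symmetric if each coefficient of $q^k$ is a symmetric function, and palindromic if, with $m=|E|$, the coefficient of $q^k$ equals that of $q^{m-k}$ for all $k$. *)

theory Defs
  imports Main "HOL-Library.FuncSet"
begin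

definition labeled_graph :: "nat \<Rightarrow> nat set set \<Rightarrow> bool" where
  "labeled_graph n E \<longleftrightarrow>
     (\<forall>e\<in>E. \<exists>i j. e = {i, j} \<and> i \<noteq> j \<and> i \<in> {1..n} \<and> j \<in> {1..n})"

definition adj :: "nat set set \<Rightarrow> nat \<Rightarrow> nat \<Rightarrow> bool" where
  "adj E u v \<longleftrightarrow> {u, v} \<in> E"

definition connected_graph :: "nat \<Rightarrow> nat set set \<Rightarrow> bool" where
  "connected_graph n E \<longleftrightarrow> (\<forall>u\<in>{1..n}. \<forall>v\<in>{1..n}. (adj E)\<^sup>*\<^sup>* u v)"

definition bipartition :: "nat \<Rightarrow> nat set set \<Rightarrow> nat set \<Rightarrow> nat set \<Rightarrow> bool" where
  "bipartition n E A B \<longleftrightarrow> A \<union> B = {1..n} \<and> A \<inter> B = {} \<and>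
     (\<forall>e\<in>E. \<not> e \<subseteq> A \<and> \<not> e \<subseteq> B)"

definition colorings :: "nat \<Rightarrow> (nat \<Rightarrow> nat) set" where
  "colorings n = {1..n} \<rightarrow>\<^sub>E {1..}"

definition proper :: "nat set set \<Rightarrow> (nat \<Rightarrow> nat) \<Rightarrow> bool" where
  "proper E c \<longleftrightarrow> (\<forall>i j. {i, j} \<in> E \<longrightarrow> c i \<noteq> c j)"

definition asc :: "nat set set \<Rightarrow> (nat \<Rightarrow> nat) \<Rightarrow> nat" where
  "asc E c = card {(i, j). i < j \<and> {i, j} \<in> E \<and> c i < c j}"

text \<open>Exponent vector of the monomial x_{c(1)} ... x_{c(n)}.\<close>
definition monomial_exp :: "nat \<Rightarrow> (nat \<Rightarrow> nat) \<Rightarrow> (nat \<Rightarrow> nat)" where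
  "monomial_exp n c = (\<lambda>a. card {v\<in>{1..n}. c v = a})"

text \<open>Coefficient of x^\<alpha> q^k in X(G;x,q).\<close>
definition cqf_coeff :: "nat \<Rightarrow> nat set set \<Rightarrow> nat \<Rightarrow> (nat \<Rightarrow> nat) \<Rightarrow> nat" where
  "cqf_coeff n E k \<alpha> =
     card {c \<in> colorings n. proper E c \<and> monomial_exp n c = \<alpha> \<and> asc E c = k}"

definition cqf_palindromic :: "nat \<Rightarrow> nat set set \<Rightarrow> bool" where
  "cqf_palindromic n E \<longleftrightarrow>
     (\<forall>k \<le> card E. \<forall>\<alpha>. cqf_coeff n E k \<alpha> = cqf_coeff n E (card E - k) \<alpha>)"

text \<open>Each q^k coefficient is invariant under permutations of the variables x_1, x_2, ...\<close>
definition cqf_symmetric :: "nat \<Rightarrow> nat set set \<Rightarrow> bool" where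
  "cqf_symmetric n E \<longleftrightarrow>
     (\<forall>k \<alpha> \<sigma>. bij \<sigma> \<and> \<sigma> 0 = 0 \<longrightarrow> cqf_coeff n E k (\<alpha> \<circ> \<sigma>) = cqf_coeff n E k \<alpha>)"

end

theory Submission
  imports Defs "HOL-Combinatorics.Transposition"
begin

text \<open>A connected bipartite graph has exactly two proper colourings with colours 1 and 2:
\<open>A \<mapsto> 1, B \<mapsto> 2\<close> and the reverse. Since \<open>|A| \<noteq> |B|\<close> their monomials differ, so the
coefficient of the first monomial is a single power \<open>q\<^sup>k\<close>, \<open>k\<close> its number of ascents, and that
of the second is \<open>q\<^sup>l\<close>. Every edge is an ascent of exactly one of the two colourings, so
\<open>k + l = |E|\<close>, and as \<open>|E|\<close> is odd, \<open>k \<noteq> l\<close>. Hence \<open>q\<^sup>k\<close> lacks its mirror term \<open>q\<^sup>l\<close>, and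
exchanging \<open>x\<^sub>1\<close> and \<open>x\<^sub>2\<close> changes the coefficient of \<open>q\<^sup>k\<close>.\<close>

lemma labeled_graph_edgeD:
  assumes "labeled_graph n E" and "{i, j} \<in> E"
  shows "i \<in> {1..n}" and "j \<in> {1..n}" and "i \<noteq> j"
  using assms unfolding labeled_graph_def by (auto simp: doubleton_eq_iff)

lemma card_oriented_edges:
  assumes "labeled_graph n E"
  shows "card {(i, j). i < j \<and> {i, j} \<in> E} = card E"
proof (rule bij_betw_same_card)
  have "e \<in> (\<lambda>(i, j). {i, j}) ` {(i, j). i < j \<and> {i, j} \<in> E}" if "e \<in> E" for e
  proof -
    obtain i j where "e = {i, j}" "i < j"
      using assms \<open>e \<in> E\<close> unfolding labeled_graph_def by (metis insert_commute nat_neq_iff)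
    then show ?thesis using \<open>e \<in> E\<close> by auto
  qed
  then show "bij_betw (\<lambda>(i, j). {i, j}) {(i, j). i < j \<and> {i, j} \<in> E} E"
    by (auto simp: bij_betw_def inj_on_def doubleton_eq_iff)
qed

lemma asc_add_asc_eq_card:
  assumes "labeled_graph n E"
    and complementary: "\<And>i j. i < j \<Longrightarrow> {i, j} \<in> E \<Longrightarrow> c i < c j \<longleftrightarrow> \<not> d i < d j"
  shows "asc E c + asc E d = card E"
proof -
  define S where "S = {(i, j). i < j \<and> {i, j} \<in> E}"
  have "finite S"
    by (rule finite_subset[of _ "{1..n} \<times> {1..n}"])
      (auto simp: S_def dest: labeled_graph_edgeD[OF assms(1)])
  have "S = {(i, j) \<in> S. c i < c j} \<union> {(i, j) \<in> S. d i < d j}"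
    and "{(i, j) \<in> S. c i < c j} \<inter> {(i, j) \<in> S. d i < d j} = {}"
    using complementary by (auto simp: S_def)
  then have "card S = card {(i, j) \<in> S. c i < c j} + card {(i, j) \<in> S. d i < d j}"
    using \<open>finite S\<close> by (metis (no_types, lifting) card_Un_disjoint finite_Un)
  moreover have "asc E f = card {(i, j) \<in> S. f i < f j}" for f
    unfolding asc_def S_def by (rule arg_cong[where f = card]) auto
  ultimately show ?thesis
    using card_oriented_edges[OF assms(1)] by (simp add: S_def)
qed

lemma monomial_exp_cong:
  "(\<And>v. v \<in> {1..n} \<Longrightarrow> c v = d v) \<Longrightarrow> monomial_exp n c = monomial_exp n d"
  unfolding monomial_exp_def by (intro ext arg_cong[where f = card]) auto

lemma monomial_exp_inj_comp:
  assumes "inj \<sigma>"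
  shows "monomial_exp n (\<sigma> \<circ> c) \<circ> \<sigma> = monomial_exp n c"
  by (simp add: monomial_exp_def fun_eq_iff inj_eq[OF assms])

lemma monomial_exp_eq_imp_image_eq:
  assumes "monomial_exp n c = monomial_exp n d"
  shows "c ` {1..n} = d ` {1..n}"
proof -
  have "f ` {1..n} = {a. monomial_exp n f a \<noteq> 0}" for f :: "nat \<Rightarrow> nat"
    by (auto simp: monomial_exp_def card_eq_0_iff)
  then show ?thesis using assms by simp
qed

lemma proper_two_colorings_agree:
  assumes "labeled_graph n E" and "connected_graph n E"
    and "proper E c" and "proper E d"
    and two_valued: "\<And>v. v \<in> {1..n} \<Longrightarrow> c v \<in> {a, b} \<and> d v \<in> {a, b}"
    and "u \<in> {1..n}" and "v \<in> {1..n}" and "c u = d u"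
  shows "c v = d v"
proof -
  have agree_step: "c x = d x \<longleftrightarrow> c y = d y" if "adj E x y" for x y
  proof -
    have e: "{x, y} \<in> E" using that by (simp add: adj_def)
    then have "c x \<noteq> c y" and "d x \<noteq> d y"
      using assms(3,4) unfolding proper_def by blast+
    moreover have "c x \<in> {a, b}" "d x \<in> {a, b}" "c y \<in> {a, b}" "d y \<in> {a, b}"
      using two_valued labeled_graph_edgeD[OF assms(1) e] by blast+
    ultimately show ?thesis by (metis empty_iff insertE)
  qed
  have "(adj E)\<^sup>*\<^sup>* u v"
    using assms(2,6,7) by (simp add: connected_graph_def)
  then show ?thesis
    using \<open>c u = d u\<close> by induction (use agree_step in blast)+
qed

lemma bipartition_sym: "bipartition n E A B \<Longrightarrow> bipartition n E B A"
  by (auto simp: bipartition_def)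

lemma bipartition_edge:
  assumes "labeled_graph n E" and "bipartition n E A B" and "{i, j} \<in> E"
  shows "i \<in> A \<longleftrightarrow> j \<notin> A"
proof -
  have "i \<in> A \<union> B" "j \<in> A \<union> B" "A \<inter> B = {}" "\<not> {i, j} \<subseteq> A" "\<not> {i, j} \<subseteq> B"
    using assms labeled_graph_edgeD[OF assms(1,3)] unfolding bipartition_def by auto
  then show ?thesis by auto
qed

definition bicoloring :: "nat \<Rightarrow> nat set \<Rightarrow> nat \<Rightarrow> nat" where
  "bicoloring n A = (\<lambda>v\<in>{1..n}. if v \<in> A then 1 else 2)"

lemma bicoloring_in_colorings: "bicoloring n A \<in> colorings n"
  by (simp add: bicoloring_def colorings_def)

lemma bicoloring_proper:
  "labeled_graph n E \<Longrightarrow> bipartition n E A B \<Longrightarrow> proper E (bicoloring n A)"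
  unfolding proper_def bicoloring_def
  by (auto dest: labeled_graph_edgeD bipartition_edge)

lemma bicoloring_swap:
  assumes "bipartition n E A B" and "v \<in> {1..n}"
  shows "bicoloring n B v = transpose 1 2 (bicoloring n A v)"
  using assms by (auto simp: bipartition_def bicoloring_def)

lemma monomial_exp_bicoloring_1:
  assumes "A \<subseteq> {1..n}"
  shows "monomial_exp n (bicoloring n A) 1 = card A"
proof -
  have "{v \<in> {1..n}. bicoloring n A v = 1} = A"
    using assms by (auto simp: bicoloring_def)
  then show ?thesis by (simp add: monomial_exp_def)
qed

lemma monomial_exp_bicoloring_ne:
  assumes "bipartition n E A B" and "card A \<noteq> card B"
  shows "monomial_exp n (bicoloring n A) \<noteq> monomial_exp n (bicoloring n B)"
proof -
  have "A \<subseteq> {1..n}" "B \<subseteq> {1..n}" using assms(1) by (auto simp: bipartition_def)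
  then show ?thesis
    using assms(2) monomial_exp_bicoloring_1 by metis
qed

lemma asc_bicoloring_add:
  assumes "labeled_graph n E" and "bipartition n E A B"
  shows "asc E (bicoloring n A) + asc E (bicoloring n B) = card E"
proof (rule asc_add_asc_eq_card[OF assms(1)])
  fix i j assume "i < j" and e: "{i, j} \<in> E"
  have "i \<in> A \<longleftrightarrow> j \<notin> A" "i \<in> B \<longleftrightarrow> j \<notin> B"
    using bipartition_edge[OF assms(1) _ e] assms(2) bipartition_sym by blast+
  moreover have "i \<in> B \<longleftrightarrow> i \<notin> A"
    using assms(2) labeled_graph_edgeD[OF assms(1) e] by (auto simp: bipartition_def)
  ultimately show "bicoloring n A i < bicoloring n A j \<longleftrightarrow> \<not> bicoloring n B i < bicoloring n B j"
    using labeled_graph_edgeD[OF assms(1) e] by (auto simp: bicoloring_def)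
qed

lemma proper_coloring_with_bicoloring_monomial:
  assumes "labeled_graph n E" and "connected_graph n E" and "bipartition n E A B" and "n \<ge> 1"
    and c: "c \<in> colorings n" "proper E c"
    and monomial: "monomial_exp n c = monomial_exp n (bicoloring n A)"
  shows "c = bicoloring n A \<or> c = bicoloring n B"
proof -
  have two_valued: "c v \<in> {1, 2}" if "v \<in> {1..n}" for v
    using that monomial_exp_eq_imp_image_eq[OF monomial] by (force simp: bicoloring_def)
  have "1 \<in> {1..n}" using \<open>n \<ge> 1\<close> by simp
  have "bicoloring n A 1 \<in> {1, 2}"
    using \<open>1 \<in> {1..n}\<close> by (simp add: bicoloring_def)
  then have "c 1 = bicoloring n A 1 \<or> c 1 = bicoloring n B 1"
    using two_valued[OF \<open>1 \<in> {1..n}\<close>] bicoloring_swap[OF assms(3) \<open>1 \<in> {1..n}\<close>]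
    by (auto simp: transpose_def)
  then obtain X where X: "X = A \<or> X = B" and agree_at_1: "c 1 = bicoloring n X 1"
    by blast
  have "proper E (bicoloring n X)"
    using X assms(1,3) bicoloring_proper bipartition_sym by blast
  then have "c v = bicoloring n X v" if "v \<in> {1..n}" for v
    using proper_two_colorings_agree[OF assms(1,2) c(2), of _ 1 2 1 v] two_valued that
      \<open>1 \<in> {1..n}\<close> agree_at_1 by (auto simp: bicoloring_def)
  then have "c = bicoloring n X"
    using c(1) by (auto simp: colorings_def bicoloring_def PiE_def extensional_def)
  then show ?thesis using X by blast
qed

lemma cqf_coeff_bicoloring:
  assumes "labeled_graph n E" and "connected_graph n E" and "bipartition n E A B" and "n \<ge> 1"
    and "card A \<noteq> card B"
  shows "cqf_coeff n E k (monomial_exp n (bicoloring n A))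
           = (if k = asc E (bicoloring n A) then 1 else 0)"
proof -
  define \<alpha> where "\<alpha> = monomial_exp n (bicoloring n A)"
  have "c = bicoloring n A"
    if "c \<in> colorings n" and "proper E c" and "monomial_exp n c = \<alpha>" for c
    using proper_coloring_with_bicoloring_monomial[OF assms(1-4) that[unfolded \<alpha>_def]]
      monomial_exp_bicoloring_ne[OF assms(3,5)] that(3) \<alpha>_def by metis
  moreover have "bicoloring n A \<in> colorings n" and "proper E (bicoloring n A)"
    using bicoloring_in_colorings bicoloring_proper[OF assms(1,3)] by blast+
  ultimately have "{c \<in> colorings n. proper E c \<and> monomial_exp n c = \<alpha> \<and> asc E c = k}
      = (if k = asc E (bicoloring n A) then {bicoloring n A} else {})"
    unfolding \<alpha>_def by (intro set_eqI) auto
  then show ?thesis by (simp add: cqf_coeff_def \<alpha>_def)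
qed

lemma not_cqf_palindromic_if_coeff_single:
  assumes coeff: "\<And>m. cqf_coeff n E m \<alpha> = (if m = k then 1 else 0)"
    and "k \<le> card E" and "card E - k \<noteq> k"
  shows "\<not> cqf_palindromic n E"
proof -
  have "cqf_coeff n E k \<alpha> \<noteq> cqf_coeff n E (card E - k) \<alpha>"
    using coeff \<open>card E - k \<noteq> k\<close> by simp
  then show ?thesis
    using \<open>k \<le> card E\<close> unfolding cqf_palindromic_def by blast
qed

lemma not_cqf_symmetric_if_coeffs_single:
  assumes "\<And>m. cqf_coeff n E m \<alpha> = (if m = k then 1 else 0)"
    and "\<And>m. cqf_coeff n E m \<beta> = (if m = l then 1 else 0)"
    and "k \<noteq> l" and "\<beta> \<circ> transpose a b = \<alpha>" and "a \<noteq> 0" and "b \<noteq> 0"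
  shows "\<not> cqf_symmetric n E"
proof
  assume "cqf_symmetric n E"
  then have "cqf_coeff n E k (\<beta> \<circ> transpose a b) = cqf_coeff n E k \<beta>"
    using \<open>a \<noteq> 0\<close> \<open>b \<noteq> 0\<close> unfolding cqf_symmetric_def by simp
  then show False using assms(1-4) by simp
qed

theorem proposition5p3:
  fixes n :: nat and E :: "nat set set" and A B :: "nat set"
  assumes "labeled_graph n E"
    and "connected_graph n E"
    and "odd (card E)"
    and "bipartition n E A B"
    and "card A \<noteq> card B"
  shows "\<not> cqf_palindromic n E \<and> \<not> cqf_symmetric n E"
proof -
  obtain i j where "{i, j} \<in> E"
    using assms(1,3) unfolding labeled_graph_def by (metis card.empty even_zero ex_in_conv)
  then have "n \<ge> 1" using labeled_graph_edgeD[OF assms(1)] by fastforce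
  define \<alpha> \<beta> k l where "\<alpha> = monomial_exp n (bicoloring n A)"
    and "\<beta> = monomial_exp n (bicoloring n B)"
    and "k = asc E (bicoloring n A)" and "l = asc E (bicoloring n B)"
  have "k + l = card E" using asc_bicoloring_add[OF assms(1,4)] by (simp add: k_def l_def)
  with assms(3) have "k \<noteq> l" by presburger
  have coeff_\<alpha>: "cqf_coeff n E m \<alpha> = (if m = k then 1 else 0)" for m
    using cqf_coeff_bicoloring[OF assms(1,2,4) \<open>n \<ge> 1\<close> assms(5)] by (simp add: \<alpha>_def k_def)
  have coeff_\<beta>: "cqf_coeff n E m \<beta> = (if m = l then 1 else 0)" for m
    using cqf_coeff_bicoloring[OF assms(1,2) bipartition_sym[OF assms(4)] \<open>n \<ge> 1\<close>] assms(5)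
    by (simp add: \<beta>_def l_def)
  have "\<beta> \<circ> transpose 1 2 = \<alpha>"
    using monomial_exp_inj_comp[OF inj_transpose, of n 1 2 "bicoloring n A"]
      monomial_exp_cong[of n "bicoloring n B"] bicoloring_swap[OF assms(4)]
    by (simp add: \<alpha>_def \<beta>_def comp_def)
  moreover have "k \<le> card E" and "card E - k \<noteq> k"
    using \<open>k + l = card E\<close> \<open>k \<noteq> l\<close> by auto
  ultimately show ?thesis
    using not_cqf_palindromic_if_coeff_single[OF coeff_\<alpha>]
      not_cqf_symmetric_if_coeffs_single[OF coeff_\<alpha> coeff_\<beta> \<open>k \<noteq> l\<close>] by simp
qed

end
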